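(* Consider the Hilbert-style system $\mathsf{Sup}$ over the language $\mathcal{L}$ described in the context, consisting of all classical propositional tautologies (instantiated with formulas of $\mathcal{L}$), Modus Ponens, the axiom schemata $\mathbf{ID}$, $\mathbf{ST}$, $\mathbf{SH}$, $\mathbf{LL+}$ and the rules $\mathbf{RCK}$ and $\mathbf{S5_F}$. Then, for all propositional formulas $\varphi,\psi,\chi,\varphi_1,\varphi_2$: (i) (RW) if $\vdash \varphi_1\to\varphi_2$ then $\vdash (\psi\rightsquigarrow\varphi_1)\to(\psi\rightsquigarrow\varphi_2)$; (ii) (LLE) if $\vdash \varphi\leftrightarrow\psi$ then $\vdash (\varphi\rightsquigarrow\chi)\leftrightarrow(\psi\rightsquigarrow\chi)$; (iii) (AND) $\vdash ((\varphi\rightsquigarrow\psi)\land(\varphi\rightsquigarrow\chi))\to(\varphi\rightsquigarrow(\psi\land\chi))$; (iv) (CUT) $\vdash ((\varphi\rightsquigarrow\psi)\land((\varphi\land\psi)\rightsquigarrow\chi))\to(\varphi\rightsquigarrow\chi)$; (v) (OR) $\vdash ((\varphi\rightsquigarrow\psi)\land(\chi\rightsquigarrow\psi))\to((\varphi\lor\chi)\rightsquigarrow\psi)$. Here $\vdash$ denotes derivability in $\mathsf{Sup}$.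
   Context: Fix a countable set of propositional variables. Propositional formulas are given by $\varphi ::= \bot \mid p \mid \varphi\land\varphi\mid\varphi\lor\varphi\mid\varphi\to\varphi\mid\varphi\leftrightarrow\varphi\mid\neg\varphi$. The language $\mathcal{L}$ consists of formulas $\alpha ::= \varphi \mid \varphi\rightsquigarrow\varphi \mid B(\alpha)\mid \alpha*\alpha\mid\neg\alpha$ ($*\in\{\land,\lor,\to,\leftrightarrow\}$), where $\varphi$ ranges over propositional formulas; so $\rightsquigarrow$ (support) is only applied to two propositional formulas. In the axioms and rules below $\varphi,\psi,\chi,\varphi_i,\psi_i$ range over propositional formulas, and rule applications must produce formulas of $\mathcal{L}$. Axioms: $\mathbf{ID}$: $\varphi\rightsquigarrow\varphi$; $\mathbf{ST}$: $(\varphi\rightsquigarrow\bot)\to\neg\varphi$; $\mathbf{SH}$: $((\psi\land\chi)\rightsquigarrow\varphi)\to(\psi\rightsquigarrow(\chi\to\varphi))$; $\mathbf{LL+}$: $(\neg(\varphi\leftrightarrow\psi)\rightsquigarrow\bot)\to((\varphi\rightsquigarrow\chi)\leftrightarrow(\psi\rightsquigarrow\chi))$. Rule $\mathbf{RCK}$: from $(\varphi_1\land\dots\land\varphi_n)\to\varphi_{n+1}$ infer $((\psi\rightsquigarrow\varphi_1)\land\dots\land(\psi\rightsquigarrow\varphi_n))\to(\psi\rightsquigarrow\varphi_{n+1})$. Rule $\mathbf{S5_F}$: from $(\ell_1\land\dots\land\ell_n)\to\chi$ infer $(\ell_1\land\dots\land\ell_n)\to(\neg\chi\rightsquigarrow\bot)$,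 where each $\ell_j$ is either $\varphi_j\rightsquigarrow\psi_j$ or $\neg(\varphi_j\rightsquigarrow\psi_j)$ and $\chi$ is propositional. *)

theory Defs
  imports Main
begin

text \<open>Propositional formulas are the formulas
  built only from Bot, variables and the boolean connectives; Sup is the
  support connective (squiggly arrow), B the unary modality.\<close>

datatype form =
    Bot
  | Var nat
  | And form form
  | Or form form
  | Imp form form
  | Iff form form
  | Neg form
  | Sup form form
  | B form

fun propf :: "form \<Rightarrow> bool" where
  "propf Bot = True"
| "propf (Var p) = True"
| "propf (And a b) = (propf a \<and> propf b)"
| "propf (Or a b) = (propf a \<and> propf b)"
| "propf (Imp a b) = (propf a \<and> propf b)"
| "propf (Iff a b) = (propf a \<and> propf b)"
| "propf (Neg a) = propf a"
| "propf (Sup a b) = False"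
| "propf (B a) = False"

text \<open>Membership in L: support is only applied to propositional formulas.\<close>
fun wf :: "form \<Rightarrow> bool" where
  "wf Bot = True"
| "wf (Var p) = True"
| "wf (And a b) = (wf a \<and> wf b)"
| "wf (Or a b) = (wf a \<and> wf b)"
| "wf (Imp a b) = (wf a \<and> wf b)"
| "wf (Iff a b) = (wf a \<and> wf b)"
| "wf (Neg a) = wf a"
| "wf (Sup a b) = (propf a \<and> propf b)"
| "wf (B a) = wf a"

text \<open>Classical evaluation treating variables, support formulas and
  B-formulas as atoms.\<close>
fun eval :: "(form \<Rightarrow> bool) \<Rightarrow> form \<Rightarrow> bool" where
  "eval v Bot = False"
| "eval v (Var p) = v (Var p)"
| "eval v (And a b) = (eval v a \<and> eval v b)"
| "eval v (Or a b) = (eval v a \<or> eval v b)"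
| "eval v (Imp a b) = (eval v a \<longrightarrow> eval v b)"
| "eval v (Iff a b) = (eval v a \<longleftrightarrow> eval v b)"
| "eval v (Neg a) = (\<not> eval v a)"
| "eval v (Sup a b) = v (Sup a b)"
| "eval v (B a) = v (B a)"

definition taut :: "form \<Rightarrow> bool" where
  "taut a \<longleftrightarrow> (\<forall>v. eval v a)"

fun conj :: "form list \<Rightarrow> form" where
  "conj [] = Neg Bot"
| "conj [a] = a"
| "conj (a # as) = And a (conj as)"

definition literal :: "form \<Rightarrow> bool" where
  "literal l \<longleftrightarrow> (\<exists>a b. propf a \<and> propf b \<and> (l = Sup a b \<or> l = Neg (Sup a b)))"

inductive deriv :: "form \<Rightarrow> bool" where
  Taut: "wf a \<Longrightarrow> taut a \<Longrightarrow> deriv a"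
| MP: "deriv a \<Longrightarrow> deriv (Imp a b) \<Longrightarrow> deriv b"
| ID: "propf a \<Longrightarrow> deriv (Sup a a)"
| ST: "propf a \<Longrightarrow> deriv (Imp (Sup a Bot) (Neg a))"
| SH: "propf a \<Longrightarrow> propf b \<Longrightarrow> propf c \<Longrightarrow>
        deriv (Imp (Sup (And b c) a) (Sup b (Imp c a)))"
| LLp: "propf a \<Longrightarrow> propf b \<Longrightarrow> propf c \<Longrightarrow>
        deriv (Imp (Sup (Neg (Iff a b)) Bot) (Iff (Sup a c) (Sup b c)))"
| RCK: "as \<noteq> [] \<Longrightarrow> \<forall>x\<in>set as. propf x \<Longrightarrow> propf a \<Longrightarrow> propf b \<Longrightarrow>
        deriv (Imp (conj as) a) \<Longrightarrow>
        deriv (Imp (conj (map (Sup b) as)) (Sup b a))"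
| S5F: "ls \<noteq> [] \<Longrightarrow> \<forall>l\<in>set ls. literal l \<Longrightarrow> propf c \<Longrightarrow>
        deriv (Imp (conj ls) c) \<Longrightarrow>
        deriv (Imp (conj ls) (Sup (Neg c) Bot))"

end

theory Submission
  imports Defs
begin

text \<open>All five rules are obtained from the axioms by classical reasoning, except
  the one step that needs S5F: a derivable propositional formula \<open>c\<close> yields
  \<open>\<not>c \<leadsto> \<bottom>\<close>, which together with LL+ gives LLE. For OR, put \<open>D = \<phi> \<or> \<chi>\<close>:
  LLE and SH turn \<open>\<phi> \<leadsto> \<psi>\<close> into \<open>D \<leadsto> (\<phi> \<rightarrow> \<psi>)\<close>, likewise for \<open>\<chi>\<close>, and RCK
  combines these with \<open>D \<leadsto> D\<close> into \<open>D \<leadsto> \<psi>\<close>.\<close>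

lemma propf_imp_wf [simp]: "propf a \<Longrightarrow> wf a"
  by (induction a) auto

lemma wf_conj: "\<forall>x\<in>set as. wf x \<Longrightarrow> wf (conj as)"
  by (induction as rule: conj.induct) auto

lemma deriv_imp_wf: "deriv a \<Longrightarrow> wf a"
proof (induction rule: deriv.induct)
  case (RCK as a b)
  then show ?case by (auto intro!: wf_conj)
next
  case (S5F ls c)
  then show ?case by (auto intro!: wf_conj simp: literal_def)
qed auto

lemma deriv_taut_consequence:
  assumes "deriv a" and "wf b" and "\<And>v. eval v a \<Longrightarrow> eval v b"
  shows "deriv b"
  by (rule MP[OF \<open>deriv a\<close>]) (use assms deriv_imp_wf in \<open>auto intro!: Taut simp: taut_def\<close>)

lemma deriv_And:
  assumes "deriv a" and "deriv b"
  shows "deriv (And a b)"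
proof -
  have "deriv (Imp a (Imp b (And a b)))"
    using assms by (auto intro!: Taut dest: deriv_imp_wf simp: taut_def)
  then show ?thesis using assms by (meson MP)
qed

lemma deriv_taut_consequence2:
  assumes "deriv a" and "deriv b" and "wf c" and "\<And>v. eval v a \<Longrightarrow> eval v b \<Longrightarrow> eval v c"
  shows "deriv c"
  using deriv_taut_consequence[OF deriv_And[OF assms(1,2)]] assms(3,4) by auto

lemma deriv_Neg_Sup_Bot:
  assumes "propf c" and "deriv c"
  shows "deriv (Sup (Neg c) Bot)"
proof -
  \<comment> \<open>S5F needs a literal as premise; the trivially supported \<open>\<bottom> \<leadsto> \<bottom>\<close> serves.\<close>
  have "deriv (Imp (conj [Sup Bot Bot]) c)"
    using assms by (auto intro: deriv_taut_consequence)
  then have "deriv (Imp (conj [Sup Bot Bot]) (Sup (Neg c) Bot))"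
    using assms(1) by (intro S5F) (auto simp: literal_def)
  then show ?thesis
    using MP[OF ID[of Bot]] by simp
qed

lemma deriv_RW:
  assumes "propf a" and "propf b" and "propf c" and "deriv (Imp a b)"
  shows "deriv (Imp (Sup c a) (Sup c b))"
  using RCK[of "[a]" b c] assms by simp

lemma deriv_LLE:
  assumes "propf a" and "propf b" and "propf c" and "deriv (Iff a b)"
  shows "deriv (Iff (Sup a c) (Sup b c))"
  using MP[OF deriv_Neg_Sup_Bot LLp] assms by simp

lemma deriv_RCK2:
  assumes "propf a" and "propf b" and "propf c" and "propf d" and "deriv (Imp (And a b) c)"
  shows "deriv (Imp (And (Sup d a) (Sup d b)) (Sup d c))"
  using RCK[of "[a, b]" c d] assms by simp

lemma deriv_AND:
  assumes "propf a" and "propf b" and "propf c"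
  shows "deriv (Imp (And (Sup a b) (Sup a c)) (Sup a (And b c)))"
  using assms by (intro deriv_RCK2) (auto intro!: Taut simp: taut_def)

lemma deriv_CUT:
  assumes "propf a" and "propf b" and "propf c"
  shows "deriv (Imp (And (Sup a b) (Sup (And a b) c)) (Sup a c))"
proof -
  have mp: "deriv (Imp (And (Sup a b) (Sup a (Imp b c))) (Sup a c))"
    using assms by (intro deriv_RCK2) (auto intro!: Taut simp: taut_def)
  have "deriv (Imp (Sup (And a b) c) (Sup a (Imp b c)))"
    using SH assms by simp
  then show ?thesis
    by (rule deriv_taut_consequence2[OF mp]) (use assms in auto)
qed

lemma deriv_Sup_imp_Sup_Imp:
  assumes "propf a" and "propf b" and "propf d" and "deriv (Imp a d)"
  shows "deriv (Imp (Sup a b) (Sup d (Imp a b)))"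
proof -
  have "deriv (Iff (And d a) a)"
    using assms by (auto intro: deriv_taut_consequence)
  then have "deriv (Iff (Sup (And d a) b) (Sup a b))"
    using assms by (intro deriv_LLE) auto
  moreover have "deriv (Imp (Sup (And d a) b) (Sup d (Imp a b)))"
    using SH assms by simp
  ultimately show ?thesis
    by (rule deriv_taut_consequence2) (use assms in auto)
qed

lemma deriv_OR:
  assumes "propf a" and "propf b" and "propf c"
  shows "deriv (Imp (And (Sup a b) (Sup c b)) (Sup (Or a c) b))"
proof -
  let ?d = "Or a c"
  have "deriv (Imp a ?d)" and "deriv (Imp c ?d)"
    using assms by (auto intro!: Taut simp: taut_def)
  then have "deriv (Imp (Sup a b) (Sup ?d (Imp a b)))"
    and "deriv (Imp (Sup c b) (Sup ?d (Imp c b)))"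
    using assms by (auto intro: deriv_Sup_imp_Sup_Imp)
  then have to_d: "deriv (Imp (And (Sup a b) (Sup c b)) (And (Sup ?d (Imp a b)) (Sup ?d (Imp c b))))"
    by (rule deriv_taut_consequence2) (use assms in auto)
  have "deriv (Sup ?d ?d)"
    using ID assms by simp
  moreover have "deriv (Imp (conj [?d, Imp a b, Imp c b]) b)"
    using assms by (auto intro!: Taut simp: taut_def)
  then have "deriv (Imp (And (Sup ?d ?d) (And (Sup ?d (Imp a b)) (Sup ?d (Imp c b)))) (Sup ?d b))"
    using RCK[of "[?d, Imp a b, Imp c b]" b ?d] assms by simp
  ultimately have "deriv (Imp (And (Sup ?d (Imp a b)) (Sup ?d (Imp c b))) (Sup ?d b))"
    by (rule deriv_taut_consequence2) (use assms in auto)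
  with to_d show ?thesis
    by (rule deriv_taut_consequence2) (use assms in auto)
qed

theorem theorem1:
  assumes "propf \<phi>" and "propf \<psi>" and "propf \<chi>" and "propf \<phi>1" and "propf \<phi>2"
  shows "(deriv (Imp \<phi>1 \<phi>2) \<longrightarrow> deriv (Imp (Sup \<psi> \<phi>1) (Sup \<psi> \<phi>2)))
       \<and> (deriv (Iff \<phi> \<psi>) \<longrightarrow> deriv (Iff (Sup \<phi> \<chi>) (Sup \<psi> \<chi>)))
       \<and> deriv (Imp (And (Sup \<phi> \<psi>) (Sup \<phi> \<chi>)) (Sup \<phi> (And \<psi> \<chi>)))
       \<and> deriv (Imp (And (Sup \<phi> \<psi>) (Sup (And \<phi> \<psi>) \<chi>)) (Sup \<phi> \<chi>))
       \<and> deriv (Imp (And (Sup \<phi> \<psi>) (Sup \<chi> \<psi>)) (Sup (Or \<phi> \<chi>) \<psi>))"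
  using assms
  by (intro conjI impI deriv_RW deriv_LLE deriv_AND deriv_CUT deriv_OR)

end
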